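(* Let $P$ be a binary pattern that contains none of $Q_1,Q_2,Q_3,Q_4$ as an interval minor, that contains both $D_2$ and $\overline D_2$ as interval minors, and that cannot be covered by two lines. Then $P$ can be transformed by a rotation or a reflection into a pattern $P_0$ of one of the following two types: Type 1: $P_0$ has three rows $r<r'<r''$ and two columns $c<c'$ with $\mathrm{supp}(P_0)\subseteq(\{r'\}\times[c,c'])\cup\{(r,c),(r'',c),(r,c'),(r'',c')\}$; Type 2: $P_0$ has two rows $r<r'$ and two columns $c<c'$ with $\mathrm{supp}(P_0)\subseteq(\{r\}\times[c,c'])\cup(\{r'\}\times[c])\cup([r]\times\{c'\})\cup\{(r',c')\}$.
   Context: All matrices are binary; rows numbered top to bottom, columns left to right; $(i,j)$ is the entry in row $i$, column $j$; $\mathrm{supp}$ is the set of 1-entries; $[a,b]=\{a,\dots,b\}$, $(a,b]=[a+1,b]$, $[n]=[1,n]$. A pattern $P\in\{0,1\}^{k\times\ell}$ is an interval minor of $M\in\{0,1\}^{m\times n}$ if there are integers $0=r_0<\dots<r_k=m$ and $0=c_0<\dots<c_\ell=n$ such that for each 1-entry $(i,j)$ of $P$ the submatrix of $M$ on rows $(r_{i-1},r_i]$ and columns $(c_{j-1},c_j]$ contains a 1-entry. $Q_1,\dots,Q_4\in\{0,1\}^{3\times3}$ have supports $\{(1,2),(2,1),(3,3)\}$, $\{(1,2),(2,3),(3,1)\}$, $\{(1,1),(2,3),(3,2)\}$, $\{(1,3),(2,1),(3,2)\}$. $D_2$ has support $\{(1,1),(2,2)\}$ and $\overline D_2$ has support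 $\{(1,2),(2,1)\}$ (both $2\times2$). A line is a row or column; a matrix can be covered by $t$ lines if some $t$ lines together contain all its 1-entries. *)

theory Defs
  imports Main
begin

text \<open>A binary m x n matrix is represented by its dimensions and its support
  (set of 1-entries, 1-indexed: row i, column j).\<close>
type_synonym bmat = "nat \<times> nat \<times> (nat \<times> nat) set"

definition wf_mat :: "bmat \<Rightarrow> bool" where
  "wf_mat A = (case A of (m, n, S) \<Rightarrow> S \<subseteq> {1..m} \<times> {1..n})"

definition interval_minor :: "bmat \<Rightarrow> bmat \<Rightarrow> bool" where
  "interval_minor P M = (case P of (k, l, SP) \<Rightarrow> case M of (m, n, SM) \<Rightarrow>
     (\<exists>r c :: nat \<Rightarrow> nat.
        r 0 = 0 \<and> r k = m \<and> (\<forall>i<k. r i < r (Suc i)) \<and>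
        c 0 = 0 \<and> c l = n \<and> (\<forall>j<l. c j < c (Suc j)) \<and>
        (\<forall>(i, j) \<in> SP. \<exists>(a, b) \<in> SM.
           r (i - 1) < a \<and> a \<le> r i \<and> c (j - 1) < b \<and> b \<le> c j)))"

definition Q1 :: bmat where "Q1 = (3, 3, {(1,2),(2,1),(3,3)})"
definition Q2 :: bmat where "Q2 = (3, 3, {(1,2),(2,3),(3,1)})"
definition Q3 :: bmat where "Q3 = (3, 3, {(1,1),(2,3),(3,2)})"
definition Q4 :: bmat where "Q4 = (3, 3, {(1,3),(2,1),(3,2)})"
definition D2 :: bmat where "D2 = (2, 2, {(1,1),(2,2)})"
definition D2bar :: bmat where "D2bar = (2, 2, {(1,2),(2,1)})"

definition coverable_by :: "nat \<Rightarrow> bmat \<Rightarrow> bool" where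
  "coverable_by t A = (case A of (m, n, S) \<Rightarrow>
     (\<exists>R C. R \<subseteq> {1..m} \<and> C \<subseteq> {1..n} \<and> card R + card C \<le> t \<and>
        (\<forall>(i, j) \<in> S. i \<in> R \<or> j \<in> C)))"

definition mtransp :: "bmat \<Rightarrow> bmat" where
  "mtransp A = (case A of (m, n, S) \<Rightarrow> (n, m, {(j, i) | i j. (i, j) \<in> S}))"
definition row_rev :: "bmat \<Rightarrow> bmat" where
  "row_rev A = (case A of (m, n, S) \<Rightarrow> (m, n, {(m + 1 - i, j) | i j. (i, j) \<in> S}))"
definition col_rev :: "bmat \<Rightarrow> bmat" where
  "col_rev A = (case A of (m, n, S) \<Rightarrow> (m, n, {(i, n + 1 - j) | i j. (i, j) \<in> S}))"

text \<open>The 8 rotations/reflections (including the identity rotation).\<close>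
definition dihedral_image :: "bmat \<Rightarrow> bmat \<Rightarrow> bool" where
  "dihedral_image A B = (\<exists>t a b :: bool.
     B = (if b then col_rev else id) ((if a then row_rev else id) ((if t then mtransp else id) A)))"

definition type1 :: "bmat \<Rightarrow> bool" where
  "type1 A = (case A of (k, l, S) \<Rightarrow>
     (\<exists>r r' r'' c c'. 1 \<le> r \<and> r < r' \<and> r' < r'' \<and> r'' \<le> k \<and> 1 \<le> c \<and> c < c' \<and> c' \<le> l \<and>
        S \<subseteq> ({r'} \<times> {c..c'}) \<union> {(r, c), (r'', c), (r, c'), (r'', c')}))"

definition type2 :: "bmat \<Rightarrow> bool" where
  "type2 A = (case A of (k, l, S) \<Rightarrow>
     (\<exists>r r' c c'. 1 \<le> r \<and> r < r' \<and> r' \<le> k \<and> 1 \<le> c \<and> c < c' \<and> c' \<le> l \<and>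
        S \<subseteq> ({r} \<times> {c..c'}) \<union> ({r'} \<times> {1..c}) \<union> ({1..r} \<times> {c'}) \<union> {(r', c')}))"

end

theory Submission
  imports Defs
begin

(* Avoiding Q1, ..., Q4 means that any three points in pairwise different rows and columns lie
   on a monotone chain.  From D2, D2bar and the absence of a two-line cover one obtains a hub:
   a point y with a diagonal partner x and an antidiagonal partner v.  Monotonicity forces
   x and v onto a common line; after a symmetry this is a row above y, with x left and v right
   of the column of y.  Every further point is then confined to the row of x and v, the row
   and the column of y, and the columns of x and v below y, and a short case analysis of which
   of these lines carry further points exhibits a pattern of type 1 or type 2. *)


definition diag :: "nat \<times> nat \<Rightarrow> nat \<times> nat \<Rightarrow> bool" where
  "diag p q \<longleftrightarrow> (fst p < fst q \<and> snd p < snd q) \<or> (fst q < fst p \<and> snd q < snd p)"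

definition antidiag :: "nat \<times> nat \<Rightarrow> nat \<times> nat \<Rightarrow> bool" where
  "antidiag p q \<longleftrightarrow> (fst p < fst q \<and> snd q < snd p) \<or> (fst q < fst p \<and> snd p < snd q)"

lemma diag_commute: "diag p q \<longleftrightarrow> diag q p"
  by (auto simp: diag_def)

lemma antidiag_commute: "antidiag p q \<longleftrightarrow> antidiag q p"
  by (auto simp: antidiag_def)

lemma diag_or_antidiag: "fst p \<noteq> fst q \<Longrightarrow> snd p \<noteq> snd q \<Longrightarrow> diag p q \<or> antidiag p q"
  by (auto simp: diag_def antidiag_def)

definition monotone_triples :: "(nat \<times> nat) set \<Rightarrow> bool" where
  "monotone_triples S \<longleftrightarrow> (\<forall>p\<in>S. \<forall>q\<in>S. \<forall>s\<in>S.
     \<not> (diag p q \<and> diag p s \<and> antidiag q s) \<and> \<not> (antidiag p q \<and> antidiag p s \<and> diag q s))"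

lemma monotone_triplesD:
  assumes "monotone_triples S" "(i1, j1) \<in> S" "(i2, j2) \<in> S" "(i3, j3) \<in> S" "i1 < i2" "i2 < i3"
  shows "j1 = j2 \<or> j1 = j3 \<or> j2 = j3 \<or> (j1 < j2 \<and> j2 < j3) \<or> (j2 < j1 \<and> j3 < j2)"
proof -
  have "\<not> (diag p q \<and> diag p s \<and> antidiag q s) \<and> \<not> (antidiag p q \<and> antidiag p s \<and> diag q s)"
    if "p \<in> S" "q \<in> S" "s \<in> S" for p q s
    using assms(1) that unfolding monotone_triples_def by blast
  from this[OF assms(2,3,4)] this[OF assms(3,2,4)] this[OF assms(4,2,3)] assms(5,6)
  show ?thesis unfolding diag_def antidiag_def by auto
qed

lemma monotone_triplesI:
  assumes "\<And>i1 j1 i2 j2 i3 j3. (i1, j1) \<in> S \<Longrightarrow> (i2, j2) \<in> S \<Longrightarrow> (i3, j3) \<in> S \<Longrightarrow>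
    i1 < i2 \<Longrightarrow> i2 < i3 \<Longrightarrow>
    j1 = j2 \<or> j1 = j3 \<or> j2 = j3 \<or> (j1 < j2 \<and> j2 < j3) \<or> (j2 < j1 \<and> j3 < j2)"
  shows "monotone_triples S"
  unfolding monotone_triples_def
proof (intro ballI)
  fix p q s assume "p \<in> S" "q \<in> S" "s \<in> S"
  then show "\<not> (diag p q \<and> diag p s \<and> antidiag q s) \<and> \<not> (antidiag p q \<and> antidiag p s \<and> diag q s)"
    using assms[of "fst p" "snd p" "fst q" "snd q" "fst s" "snd s"]
      assms[of "fst p" "snd p" "fst s" "snd s" "fst q" "snd q"]
      assms[of "fst q" "snd q" "fst p" "snd p" "fst s" "snd s"]
      assms[of "fst q" "snd q" "fst s" "snd s" "fst p" "snd p"]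
      assms[of "fst s" "snd s" "fst p" "snd p" "fst q" "snd q"]
      assms[of "fst s" "snd s" "fst q" "snd q" "fst p" "snd p"]
    unfolding diag_def antidiag_def by auto
qed

lemma hub_partners_aligned:
  assumes "monotone_triples S" "y \<in> S" "x \<in> S" "v \<in> S" "diag y x" "antidiag y v"
  shows "fst x = fst v \<or> snd x = snd v"
proof (rule ccontr)
  assume "\<not> ?thesis"
  then have "diag x v \<or> antidiag x v" using diag_or_antidiag by blast
  moreover have "\<not> (diag x y \<and> diag x v \<and> antidiag y v)" "\<not> (antidiag v y \<and> antidiag v x \<and> diag y x)"
    using assms(1-4) unfolding monotone_triples_def by blast+
  ultimately show False using assms(5,6) diag_commute antidiag_commute by blast
qed

lemma wf_matD:
  "wf_mat (m, n, S) \<Longrightarrow> (i, j) \<in> S \<Longrightarrow> 1 \<le> i \<and> i \<le> m \<and> 1 \<le> j \<and> j \<le> n"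
  unfolding wf_mat_def by auto

lemma interval_minor_D2_diag:
  assumes "interval_minor D2 (m, n, S)" shows "\<exists>p\<in>S. \<exists>q\<in>S. diag p q"
proof -
  obtain r c :: "nat \<Rightarrow> nat" where "\<forall>(i, j)\<in>{(1, 1), (2, 2)}. \<exists>(a, b)\<in>S.
      r (i - 1) < a \<and> a \<le> r i \<and> c (j - 1) < b \<and> b \<le> c j"
    using assms unfolding interval_minor_def D2_def by auto
  then obtain a b a' b' where "(a, b) \<in> S" "(a', b') \<in> S" "a \<le> r 1" "r 1 < a'" "b \<le> c 1" "c 1 < b'"
    by fastforce
  then show ?thesis unfolding diag_def by force
qed

lemma interval_minor_D2bar_antidiag:
  assumes "interval_minor D2bar (m, n, S)" shows "\<exists>p\<in>S. \<exists>q\<in>S. antidiag p q"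
proof -
  obtain r c :: "nat \<Rightarrow> nat" where "\<forall>(i, j)\<in>{(1, 2), (2, 1)}. \<exists>(a, b)\<in>S.
      r (i - 1) < a \<and> a \<le> r i \<and> c (j - 1) < b \<and> b \<le> c j"
    using assms unfolding interval_minor_def D2bar_def by auto
  then obtain a b a' b' where "(a, b) \<in> S" "(a', b') \<in> S" "a \<le> r 1" "r 1 < a'" "c 1 < b" "b' \<le> c 1"
    by fastforce
  then show ?thesis unfolding antidiag_def by force
qed

lemma interval_minor_3x3I:
  assumes "wf_mat (m, n, S)" "(i1, c s1) \<in> S" "(i2, c s2) \<in> S" "(i3, c s3) \<in> S"
    "i1 < i2" "i2 < i3" "c 1 < c 2" "c 2 < c 3" "{s1, s2, s3} = {1, 2, 3}"
  shows "interval_minor (3, 3, {(1, s1), (2, s2), (3, s3)}) (m, n, S)"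
proof -
  define r where "r = (!) [0, i1, i2, m]"
  define c' where "c' = (!) [0, c 1, c 2, n]"
  have cols: "c 1 \<in> c ` {s1, s2, s3}" "c 3 \<in> c ` {s1, s2, s3}" unfolding assms(9) by simp_all
  have "0 < i1" "i3 \<le> m" "0 < c 1" "c 3 \<le> n"
    using assms(1-4) cols unfolding wf_mat_def by auto
  then have cuts: "r 0 = 0 \<and> r 3 = m \<and> (\<forall>i<3. r i < r (Suc i))"
    "c' 0 = 0 \<and> c' 3 = n \<and> (\<forall>j<3. c' j < c' (Suc j))"
    using assms(5-8) by (simp_all add: r_def c'_def less_Suc_eq numeral_3_eq_3)
  have "c' (s - 1) < c s \<and> c s \<le> c' s" if "s \<in> {1, 2, 3}" for s
    using that assms(7,8) \<open>0 < c 1\<close> \<open>c 3 \<le> n\<close> by (auto simp: c'_def numeral_3_eq_3)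
  moreover have "s1 \<in> {1, 2, 3}" "s2 \<in> {1, 2, 3}" "s3 \<in> {1, 2, 3}" using assms(9) by blast+
  ultimately have "c' (s - 1) < c s \<and> c s \<le> c' s" if "s \<in> {s1, s2, s3}" for s
    using that by blast
  then have "\<exists>(a, b)\<in>S. r (i - 1) < a \<and> a \<le> r i \<and> c' (j - 1) < b \<and> b \<le> c' j"
    if "(i, j) \<in> {(1, s1), (2, s2), (3, s3)}" for i j
    using that assms(2-6) \<open>0 < i1\<close> \<open>i3 \<le> m\<close> by (force simp: r_def numeral_3_eq_3)
  with cuts show ?thesis unfolding interval_minor_def prod.case by blast
qed

lemma monotone_triples_if_Q_free:
  assumes "wf_mat (m, n, S)" "\<not> interval_minor Q1 (m, n, S)" "\<not> interval_minor Q2 (m, n, S)"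
    "\<not> interval_minor Q3 (m, n, S)" "\<not> interval_minor Q4 (m, n, S)"
  shows "monotone_triples S"
proof (rule monotone_triplesI, rule ccontr)
  fix i1 j1 i2 j2 i3 j3
  assume pts: "(i1, j1) \<in> S" "(i2, j2) \<in> S" "(i3, j3) \<in> S" "i1 < i2" "i2 < i3"
    and "\<not> (j1 = j2 \<or> j1 = j3 \<or> j2 = j3 \<or> (j1 < j2 \<and> j2 < j3) \<or> (j2 < j1 \<and> j3 < j2))"
  then consider "j2 < j1" "j1 < j3" | "j3 < j1" "j1 < j2" | "j1 < j3" "j3 < j2" | "j2 < j3" "j3 < j1"
    by linarith
  then show False
  proof cases
    case 1
    have "interval_minor Q1 (m, n, S)" unfolding Q1_def
      using interval_minor_3x3I[OF assms(1), of i1 "(!) [0, j2, j1, j3]" 2 i2 1 i3 3] pts 1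
      by (simp add: numeral_2_eq_2 numeral_3_eq_3 insert_commute)
    with assms(2) show False ..
  next
    case 2
    have "interval_minor Q2 (m, n, S)" unfolding Q2_def
      using interval_minor_3x3I[OF assms(1), of i1 "(!) [0, j3, j1, j2]" 2 i2 3 i3 1] pts 2
      by (simp add: numeral_2_eq_2 numeral_3_eq_3 insert_commute)
    with assms(3) show False ..
  next
    case 3
    have "interval_minor Q3 (m, n, S)" unfolding Q3_def
      using interval_minor_3x3I[OF assms(1), of i1 "(!) [0, j1, j3, j2]" 1 i2 3 i3 2] pts 3
      by (simp add: numeral_2_eq_2 numeral_3_eq_3 insert_commute)
    with assms(4) show False ..
  next
    case 4
    have "interval_minor Q4 (m, n, S)" unfolding Q4_def
      using interval_minor_3x3I[OF assms(1), of i1 "(!) [0, j2, j3, j1]" 3 i2 1 i3 2] pts 4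
      by (simp add: numeral_2_eq_2 numeral_3_eq_3 insert_commute)
    with assms(5) show False ..
  qed
qed

lemma not_coverable_by_2D:
  assumes "\<not> coverable_by 2 (m, n, S)" "wf_mat (m, n, S)" "finite R" "finite C" "card R + card C \<le> 2"
  obtains i j where "(i, j) \<in> S" "i \<notin> R" "j \<notin> C"
proof -
  have "card (R \<inter> {1..m}) + card (C \<inter> {1..n}) \<le> 2"
    using assms(3-5) card_mono[OF assms(3) inf_le1, of "{1..m}"] card_mono[OF assms(4) inf_le1, of "{1..n}"] by linarith
  then have "coverable_by 2 (m, n, S)" if "\<forall>(i, j)\<in>S. i \<in> R \<inter> {1..m} \<or> j \<in> C \<inter> {1..n}"
    unfolding coverable_by_def prod.case using that
    by (intro exI[of _ "R \<inter> {1..m}"] exI[of _ "C \<inter> {1..n}"]) simp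
  with assms(1) have "\<not> (\<forall>(i, j)\<in>S. i \<in> R \<inter> {1..m} \<or> j \<in> C \<inter> {1..n})" by blast
  then obtain i j where "(i, j) \<in> S" "i \<notin> R \<inter> {1..m}" "j \<notin> C \<inter> {1..n}" by blast
  with wf_matD[OF assms(2)] show ?thesis by (intro that[of i j]) auto
qed

lemma not_coverable_by_2_rows:
  assumes "\<not> coverable_by 2 (m, n, S)" "wf_mat (m, n, S)"
  obtains i j where "(i, j) \<in> S" "i \<noteq> r" "i \<noteq> r'"
proof -
  have "card {r, r'} + card {} \<le> 2" by (simp add: card_insert_if)
  then show ?thesis using not_coverable_by_2D[OF assms, of "{r, r'}" "{}"] that by blast
qed

lemma not_coverable_by_2_row_col:
  assumes "\<not> coverable_by 2 (m, n, S)" "wf_mat (m, n, S)"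
  obtains i j where "(i, j) \<in> S" "i \<noteq> r" "j \<noteq> c"
  using not_coverable_by_2D[OF assms, of "{r}" "{c}"] by auto

lemma mtransp_eq: "mtransp (m, n, S) = (n, m, (\<lambda>(i, j). (j, i)) ` S)"
  unfolding mtransp_def by auto

lemma row_rev_eq: "row_rev (m, n, S) = (m, n, (\<lambda>(i, j). (m + 1 - i, j)) ` S)"
  unfolding row_rev_def by auto

lemma col_rev_eq: "col_rev (m, n, S) = (m, n, (\<lambda>(i, j). (i, n + 1 - j)) ` S)"
  unfolding col_rev_def by auto

lemma col_rev_mtransp_eq: "col_rev (mtransp (m, n, S)) = (n, m, (\<lambda>(i, j). (j, m + 1 - i)) ` S)"
  by (simp add: mtransp_eq col_rev_eq image_image case_prod_beta)

lemma col_rev_conv_row_rev: "col_rev A = mtransp (row_rev (mtransp A))"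
  by (cases A) (simp add: mtransp_eq row_rev_eq col_rev_eq image_image case_prod_beta)

lemma wf_mat_mtransp [simp]: "wf_mat A \<Longrightarrow> wf_mat (mtransp A)"
  by (cases A) (auto simp: mtransp_eq wf_mat_def)

lemma wf_mat_row_rev [simp]: "wf_mat A \<Longrightarrow> wf_mat (row_rev A)"
  by (cases A) (force simp: row_rev_eq wf_mat_def)

lemma wf_mat_col_rev [simp]: "wf_mat A \<Longrightarrow> wf_mat (col_rev A)"
  by (simp add: col_rev_conv_row_rev)

lemma mtransp_mtransp [simp]: "mtransp (mtransp A) = A"
  by (cases A) (simp add: mtransp_eq image_image case_prod_beta)

lemma row_rev_row_rev [simp]: "wf_mat A \<Longrightarrow> row_rev (row_rev A) = A"
proof (cases A)
  case (fields m n S)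
  assume "wf_mat A"
  then have "(\<lambda>(i, j). (m + 1 - i, j)) ` (\<lambda>(i, j). (m + 1 - i, j)) ` S = S"
    using fields by (force simp: image_image wf_mat_def)
  then show ?thesis using fields by (simp add: row_rev_eq)
qed

lemma col_rev_col_rev [simp]: "wf_mat A \<Longrightarrow> col_rev (col_rev A) = A"
  by (simp add: col_rev_conv_row_rev)

lemma row_rev_col_rev [simp]: "row_rev (col_rev A) = col_rev (row_rev A)"
  by (cases A) (simp add: row_rev_eq col_rev_eq image_image case_prod_beta)

lemma mtransp_row_rev [simp]: "mtransp (row_rev A) = col_rev (mtransp A)"
  by (simp add: col_rev_conv_row_rev)

lemma mtransp_col_rev [simp]: "mtransp (col_rev A) = row_rev (mtransp A)"
  by (simp add: col_rev_conv_row_rev del: mtransp_row_rev)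

lemma monotone_triples_image:
  assumes "monotone_triples S" "(D, A) \<in> {(diag, antidiag), (antidiag, diag)}"
    and "\<And>p q. p \<in> S \<Longrightarrow> q \<in> S \<Longrightarrow> diag (f p) (f q) = D p q \<and> antidiag (f p) (f q) = A p q"
  shows "monotone_triples (f ` S)"
  unfolding monotone_triples_def
proof (intro ballI)
  fix x y z assume "x \<in> f ` S" "y \<in> f ` S" "z \<in> f ` S"
  then obtain p q s where pqs: "p \<in> S" "q \<in> S" "s \<in> S" and "x = f p" "y = f q" "z = f s" by blast
  moreover have "\<not> (D p q \<and> D p s \<and> A q s) \<and> \<not> (A p q \<and> A p s \<and> D q s)"
    using assms(1,2) pqs unfolding monotone_triples_def by auto
  ultimately show "\<not> (diag x y \<and> diag x z \<and> antidiag y z) \<and> \<not> (antidiag x y \<and> antidiag x z \<and> diag y z)"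
    using assms(3)[OF pqs(1,2)] assms(3)[OF pqs(1,3)] assms(3)[OF pqs(2,3)] by simp
qed

lemma monotone_triples_mtransp:
  "monotone_triples S \<Longrightarrow> monotone_triples ((\<lambda>(i, j). (j, i)) ` S)"
  by (rule monotone_triples_image[of _ diag antidiag]) (auto simp: diag_def antidiag_def case_prod_beta)

lemma monotone_triples_row_rev:
  assumes "wf_mat (m, n, S)" "monotone_triples S"
  shows "monotone_triples ((\<lambda>(i, j). (m + 1 - i, j)) ` S)"
proof (rule monotone_triples_image[OF assms(2), of antidiag diag])
  fix p q assume "p \<in> S" "q \<in> S"
  then have "fst p \<le> m" "fst q \<le> m" using wf_matD[OF assms(1)] by (metis prod.collapse)+
  then show "diag ((\<lambda>(i, j). (m + 1 - i, j)) p) ((\<lambda>(i, j). (m + 1 - i, j)) q) = antidiag p q \<and>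
    antidiag ((\<lambda>(i, j). (m + 1 - i, j)) p) ((\<lambda>(i, j). (m + 1 - i, j)) q) = diag p q"
    by (auto simp: diag_def antidiag_def case_prod_beta)
qed simp

lemma monotone_triples_col_rev:
  assumes "wf_mat (m, n, S)" "monotone_triples S"
  shows "monotone_triples ((\<lambda>(i, j). (i, n + 1 - j)) ` S)"
proof (rule monotone_triples_image[OF assms(2), of antidiag diag])
  fix p q assume "p \<in> S" "q \<in> S"
  then have "snd p \<le> n" "snd q \<le> n" using wf_matD[OF assms(1)] by (metis prod.collapse)+
  then show "diag ((\<lambda>(i, j). (i, n + 1 - j)) p) ((\<lambda>(i, j). (i, n + 1 - j)) q) = antidiag p q \<and>
    antidiag ((\<lambda>(i, j). (i, n + 1 - j)) p) ((\<lambda>(i, j). (i, n + 1 - j)) q) = diag p q"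
    by (auto simp: diag_def antidiag_def case_prod_beta)
qed simp

lemma coverable_by_mtransp: "coverable_by t (mtransp A) \<Longrightarrow> coverable_by t A"
proof (cases A)
  case (fields m n S)
  assume "coverable_by t (mtransp A)"
  then obtain C R where "C \<subseteq> {1..n}" "R \<subseteq> {1..m}" "card C + card R \<le> t"
    "\<forall>(j, i)\<in>(\<lambda>(i, j). (j, i)) ` S. j \<in> C \<or> i \<in> R"
    unfolding fields mtransp_eq coverable_by_def prod.case by blast
  then show ?thesis unfolding fields coverable_by_def prod.case by (intro exI[of _ R] exI[of _ C]) auto
qed

lemma coverable_by_row_rev:
  assumes "wf_mat A" "coverable_by t (row_rev A)" shows "coverable_by t A"
proof (cases A)
  case (fields m n S)
  from assms(2) obtain R C where RC: "R \<subseteq> {1..m}" "C \<subseteq> {1..n}" "card R + card C \<le> t"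
    "\<forall>(i, j)\<in>(\<lambda>(i, j). (m + 1 - i, j)) ` S. i \<in> R \<or> j \<in> C"
    unfolding fields row_rev_eq coverable_by_def prod.case by blast
  let ?R = "(\<lambda>i. m + 1 - i) ` R"
  have "?R \<subseteq> {1..m}" using RC(1) by (force simp: subset_iff)
  moreover have "card ?R + card C \<le> t"
    using RC(3) card_image_le[OF finite_subset[OF RC(1)], of "\<lambda>i. m + 1 - i"] by simp
  moreover have "\<forall>(i, j)\<in>S. i \<in> ?R \<or> j \<in> C"
  proof clarify
    fix i j assume "(i, j) \<in> S" "j \<notin> C"
    then have "m + 1 - i \<in> R" "i \<le> m"
      using RC(4)[rule_format, OF imageI[OF \<open>(i, j) \<in> S\<close>]] wf_matD[OF assms(1)[unfolded fields]] by auto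
    then show "i \<in> ?R" by (metis diff_diff_cancel le_SucI Suc_eq_plus1 image_eqI)
  qed
  ultimately show ?thesis unfolding fields coverable_by_def prod.case using RC(2) by blast
qed

lemma coverable_by_col_rev: "wf_mat A \<Longrightarrow> coverable_by t (col_rev A) \<Longrightarrow> coverable_by t A"
  unfolding col_rev_conv_row_rev by (metis coverable_by_mtransp coverable_by_row_rev wf_mat_mtransp)

definition dihedral_images :: "bmat \<Rightarrow> bmat set" where
  "dihedral_images A = {A, col_rev A, row_rev A, col_rev (row_rev A),
     mtransp A, col_rev (mtransp A), row_rev (mtransp A), col_rev (row_rev (mtransp A))}"

lemma dihedral_image_iff: "dihedral_image A P \<longleftrightarrow> P \<in> dihedral_images A"
  unfolding dihedral_image_def dihedral_images_def ex_bool_eq by auto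

definition dihedral_type12 :: "bmat \<Rightarrow> bool" where
  "dihedral_type12 A \<longleftrightarrow> (\<exists>P0. dihedral_image A P0 \<and> (type1 P0 \<or> type2 P0))"

lemma dihedral_type12I: "P \<in> dihedral_images A \<Longrightarrow> type1 P \<or> type2 P \<Longrightarrow> dihedral_type12 A"
  unfolding dihedral_type12_def dihedral_image_iff by blast

lemma dihedral_type12_mtransp: "dihedral_type12 (mtransp A) \<Longrightarrow> dihedral_type12 A"
  unfolding dihedral_type12_def dihedral_image_iff dihedral_images_def by auto

lemma dihedral_type12_row_rev: "wf_mat A \<Longrightarrow> dihedral_type12 (row_rev A) \<Longrightarrow> dihedral_type12 A"
  unfolding dihedral_type12_def dihedral_image_iff dihedral_images_def by auto

lemma dihedral_type12_col_rev: "wf_mat A \<Longrightarrow> dihedral_type12 (col_rev A) \<Longrightarrow> dihedral_type12 A"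
  unfolding dihedral_type12_def dihedral_image_iff dihedral_images_def by auto

definition type1_region :: "nat \<Rightarrow> nat \<Rightarrow> nat \<Rightarrow> nat \<Rightarrow> nat \<Rightarrow> (nat \<times> nat) set" where
  "type1_region r r' r'' c c' = {r'} \<times> {c..c'} \<union> {(r, c), (r'', c), (r, c'), (r'', c')}"

definition type2_region :: "nat \<Rightarrow> nat \<Rightarrow> nat \<Rightarrow> nat \<Rightarrow> (nat \<times> nat) set" where
  "type2_region r r' c c' = {r} \<times> {c..c'} \<union> {r'} \<times> {1..c} \<union> {1..r} \<times> {c'} \<union> {(r', c')}"

lemma type1I:
  "1 \<le> r \<Longrightarrow> r < r' \<Longrightarrow> r' < r'' \<Longrightarrow> r'' \<le> k \<Longrightarrow>
    1 \<le> c \<Longrightarrow> c < c' \<Longrightarrow> c' \<le> l \<Longrightarrow>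
    S \<subseteq> type1_region r r' r'' c c' \<Longrightarrow> type1 (k, l, S)"
  unfolding type1_def type1_region_def by blast

lemma type2I:
  "1 \<le> r \<Longrightarrow> r < r' \<Longrightarrow> r' \<le> k \<Longrightarrow> 1 \<le> c \<Longrightarrow> c < c' \<Longrightarrow> c' \<le> l \<Longrightarrow>
    S \<subseteq> type2_region r r' c c' \<Longrightarrow> type2 (k, l, S)"
  unfolding type2_def type2_region_def by blast

lemma image_subset_pairI:
  "(\<And>i j. (i, j) \<in> S \<Longrightarrow> f i j \<in> T) \<Longrightarrow> (\<lambda>(i, j). f i j) ` S \<subseteq> T"
  by auto

locale hub_config =
  fixes m n :: nat and S :: "(nat \<times> nat) set" and R a b yr yc :: nat
  assumes wf: "wf_mat (m, n, S)" and mono: "monotone_triples S"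
    and left: "(R, a) \<in> S" and right: "(R, b) \<in> S" and hub: "(yr, yc) \<in> S"
    and order: "R < yr" "a < yc" "yc < b"
    and left_last: "\<And>j. (R, j) \<in> S \<Longrightarrow> j < yc \<Longrightarrow> j \<le> a"
    and right_first: "\<And>j. (R, j) \<in> S \<Longrightarrow> yc < j \<Longrightarrow> b \<le> j"
begin

lemmas chain = monotone_triplesD[OF mono]

lemma bounds: "1 \<le> R" "yr \<le> m" "1 \<le> a" "b \<le> n"
  using wf_matD[OF wf left] wf_matD[OF wf right] wf_matD[OF wf hub] by auto

lemma off_hub_lines:
  assumes "(i, j) \<in> S" "i \<noteq> yr" "j \<noteq> yc"
  shows "(antidiag (yr, yc) (i, j) \<and> (i = R \<or> j = a)) \<or> (diag (yr, yc) (i, j) \<and> (i = R \<or> j = b))"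
proof -
  have "diag (yr, yc) (R, a)" "antidiag (yr, yc) (R, b)" using order by (auto simp: diag_def antidiag_def)
  moreover have "diag (yr, yc) (i, j) \<or> antidiag (yr, yc) (i, j)" using assms(2,3) diag_or_antidiag by simp
  ultimately show ?thesis
    using hub_partners_aligned[OF mono hub left assms(1)] hub_partners_aligned[OF mono hub assms(1) right] by auto
qed

lemma col_rev:
  "hub_config m n ((\<lambda>(i, j). (i, n + 1 - j)) ` S) R (n + 1 - b) (n + 1 - a) yr (n + 1 - yc)"
proof
  show "wf_mat (m, n, (\<lambda>(i, j). (i, n + 1 - j)) ` S)" using wf_mat_col_rev[OF wf] by (simp add: col_rev_eq)
  show "monotone_triples ((\<lambda>(i, j). (i, n + 1 - j)) ` S)" by (rule monotone_triples_col_rev[OF wf mono])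
  show "(R, n + 1 - b) \<in> (\<lambda>(i, j). (i, n + 1 - j)) ` S" using right by force
  show "(R, n + 1 - a) \<in> (\<lambda>(i, j). (i, n + 1 - j)) ` S" using left by force
  show "(yr, n + 1 - yc) \<in> (\<lambda>(i, j). (i, n + 1 - j)) ` S" using hub by force
  show "j \<le> n + 1 - b" if j: "(R, j) \<in> (\<lambda>(i, j). (i, n + 1 - j)) ` S" "j < n + 1 - yc" for j
  proof -
    obtain j' where "(R, j') \<in> S" "j = n + 1 - j'" using j(1) by force
    with j(2) right_first[of j'] show ?thesis by fastforce
  qed
  show "n + 1 - a \<le> j" if j: "(R, j) \<in> (\<lambda>(i, j). (i, n + 1 - j)) ` S" "n + 1 - yc < j" for j
  proof -
    obtain j' where j': "(R, j') \<in> S" "j = n + 1 - j'" using j(1) by force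
    with j(2) left_last[of j'] wf_matD[OF wf j'(1)] show ?thesis by fastforce
  qed
qed (use order bounds in auto)

end

locale hub_three_lines = hub_config +
  assumes not_coverable: "\<not> coverable_by 2 (m, n, S)"
    and lines: "\<And>i j. (i, j) \<in> S \<Longrightarrow> i = R \<or> i = yr \<or> j = yc"
begin

lemma hub_row_point:
  obtains j where "(yr, j) \<in> S" "j \<noteq> yc"
  using not_coverable_by_2_row_col[OF not_coverable wf, of R yc] lines by metis

lemma hub_col_between:
  assumes "(i, yc) \<in> S" shows "R \<le> i" "i \<le> yr"
proof -
  obtain j where j: "(yr, j) \<in> S" "j \<noteq> yc" by (rule hub_row_point)
  show "R \<le> i"
  proof (rule ccontr)
    assume "\<not> R \<le> i"
    then show False using chain[OF assms left j(1)] chain[OF assms right j(1)] order j(2) by auto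
  qed
  show "i \<le> yr"
  proof (rule ccontr)
    assume "\<not> i \<le> yr"
    then show False using chain[OF left j(1) assms] chain[OF right j(1) assms] order j(2) by auto
  qed
qed

lemma hub_col_inner_point:
  obtains i where "(i, yc) \<in> S" "R < i" "i < yr"
proof -
  obtain i j where "(i, j) \<in> S" "i \<noteq> R" "i \<noteq> yr"
    by (rule not_coverable_by_2_rows[OF not_coverable wf])
  with lines hub_col_between that show thesis by (metis le_neq_implies_less)
qed

lemma hub_row_matches_row_R:
  assumes "(yr, j) \<in> S" "j \<noteq> yc" "(R, a') \<in> S" "a' < yc" "(R, b') \<in> S" "yc < b'"
  shows "j = a' \<or> j = b'"
proof -
  obtain i where i: "(i, yc) \<in> S" "R < i" "i < yr" by (rule hub_col_inner_point)
  show ?thesis using chain[OF assms(3) i(1) assms(1)] chain[OF assms(5) i(1) assms(1)] i assms(2,4,6) by auto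
qed

lemma single_points_left_right:
  assumes "\<And>a'. (R, a') \<in> S \<Longrightarrow> a' < yc \<Longrightarrow> a' = a"
    and "\<And>b'. (R, b') \<in> S \<Longrightarrow> yc < b' \<Longrightarrow> b' = b"
  shows "dihedral_type12 (m, n, S)"
proof -
  have "(\<lambda>(i, j). (j, i)) ` S \<subseteq> type1_region a yc b R yr"
  proof (rule image_subset_pairI)
    fix i j assume ij: "(i, j) \<in> S"
    consider "i = R" | "i = yr" "j \<noteq> yc" | "j = yc" using lines[OF ij] by blast
    then show "(j, i) \<in> type1_region a yc b R yr"
    proof cases
      case 1
      then show ?thesis using assms ij order by (cases j yc rule: linorder_cases) (auto simp: type1_region_def)
    next
      case 2
      then show ?thesis using hub_row_matches_row_R[of j a b] ij left right order by (auto simp: type1_region_def)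
    next
      case 3
      then show ?thesis using hub_col_between ij by (auto simp: type1_region_def)
    qed
  qed
  then have "type1 (mtransp (m, n, S))"
    unfolding mtransp_eq using order bounds by (intro type1I) auto
  then show ?thesis using dihedral_type12I[of "mtransp (m, n, S)"] by (simp add: dihedral_images_def)
qed

lemma second_point_left:
  assumes "(R, a') \<in> S" "a' < yc" "a' \<noteq> a"
  shows "dihedral_type12 (m, n, S)"
proof -
  have row_hub: "j = b" if "(yr, j) \<in> S" "j \<noteq> yc" for j
    using hub_row_matches_row_R[OF that left order(2) right order(3)]
      hub_row_matches_row_R[OF that assms(1,2) right order(3)]
      assms(3) by auto
  have row_right: "b' = b" if "(R, b') \<in> S" "yc < b'" for b'
  proof -
    obtain j where "(yr, j) \<in> S" "j \<noteq> yc" by (rule hub_row_point)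
    with hub_row_matches_row_R[OF this left order(2) that] row_hub order show ?thesis by fastforce
  qed
  have "(\<lambda>(i, j). (j, m + 1 - i)) ` S \<subseteq> type2_region yc b (m + 1 - yr) (m + 1 - R)"
  proof (rule image_subset_pairI)
    fix i j assume ij: "(i, j) \<in> S"
    have "1 \<le> i" "i \<le> m" "1 \<le> j" using wf_matD[OF wf ij] by auto
    consider "i = R" "j \<le> yc" | "i = R" "yc < j" | "i = yr" "j \<noteq> yc" | "j = yc"
      using lines[OF ij] by fastforce
    then show "(j, m + 1 - i) \<in> type2_region yc b (m + 1 - yr) (m + 1 - R)"
    proof cases
      case 3
      then show ?thesis using row_hub[of j] ij \<open>1 \<le> i\<close> \<open>i \<le> m\<close> by (auto simp: type2_region_def)
    next
      case 4
      then show ?thesis using hub_col_between[of i] ij bounds by (auto simp: type2_region_def)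
    qed (use row_right ij \<open>1 \<le> j\<close> in \<open>auto simp: type2_region_def\<close>)
  qed
  then have "type2 (col_rev (mtransp (m, n, S)))"
    unfolding col_rev_mtransp_eq using order bounds by (intro type2I) auto
  then show ?thesis using dihedral_type12I[of "col_rev (mtransp (m, n, S))"] by (simp add: dihedral_images_def)
qed

lemma col_rev: "hub_three_lines m n ((\<lambda>(i, j). (i, n + 1 - j)) ` S) R (n + 1 - b) (n + 1 - a) yr (n + 1 - yc)"
proof -
  interpret flipped: hub_config m n "(\<lambda>(i, j). (i, n + 1 - j)) ` S" R "n + 1 - b" "n + 1 - a" yr "n + 1 - yc"
    by (rule col_rev)
  show ?thesis
  proof
    show "\<not> coverable_by 2 (m, n, (\<lambda>(i, j). (i, n + 1 - j)) ` S)"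
      using coverable_by_col_rev[OF wf, of 2, unfolded col_rev_eq] not_coverable by blast
    show "i = R \<or> i = yr \<or> j = n + 1 - yc" if "(i, j) \<in> (\<lambda>(i, j). (i, n + 1 - j)) ` S" for i j
      using that lines by auto
  qed
qed

lemma dihedral_type12: "dihedral_type12 (m, n, S)"
proof (cases "\<exists>a'. (R, a') \<in> S \<and> a' < yc \<and> a' \<noteq> a")
  case True
  then show ?thesis using second_point_left by blast
next
  case no_second_left: False
  show ?thesis
  proof (cases "\<exists>b'. (R, b') \<in> S \<and> yc < b' \<and> b' \<noteq> b")
    case True
    then obtain b' where b': "(R, b') \<in> S" "yc < b'" "b' \<noteq> b" by blast
    interpret flipped: hub_three_lines m n "(\<lambda>(i, j). (i, n + 1 - j)) ` S" R "n + 1 - b" "n + 1 - a" yr "n + 1 - yc"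
      by (rule col_rev)
    have "b' \<le> n" using wf_matD[OF wf b'(1)] by simp
    then have "dihedral_type12 (m, n, (\<lambda>(i, j). (i, n + 1 - j)) ` S)"
      using b' bounds by (intro flipped.second_point_left[of "n + 1 - b'"]) force+
    then show ?thesis using dihedral_type12_col_rev[OF wf] by (simp add: col_rev_eq)
  next
    case False
    with no_second_left show ?thesis by (intro single_points_left_right) auto
  qed
qed

end

locale hub_below = hub_config +
  fixes low :: nat
  assumes below: "(low, b) \<in> S" "yr < low"
    and below_first: "\<And>i. (i, b) \<in> S \<Longrightarrow> yr < i \<Longrightarrow> low \<le> i"
begin

lemma off_hub_lines_below:
  assumes "(i, j) \<in> S" "i \<noteq> yr" "j \<noteq> yc"
  shows "(i = R \<and> j = b) \<or> (i = low \<and> j = a) \<or> (diag (yr, yc) (i, j) \<and> (i = R \<or> j = b))"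
proof -
  have "diag (yr, yc) (low, b)" using below order by (auto simp: diag_def)
  then have "antidiag (yr, yc) (i, j) \<Longrightarrow> i = low \<or> j = b"
    using hub_partners_aligned[OF mono hub below(1) assms(1)] by auto
  then show ?thesis using off_hub_lines[OF assms] order below(2) by auto
qed

lemma hub_col_between:
  assumes "(i, yc) \<in> S" shows "R \<le> i" "i \<le> low"
proof -
  show "R \<le> i" using chain[OF assms left below(1)] order below(2) by (cases "i < R") auto
  show "i \<le> low" using chain[OF left below(1) assms] order below(2) by (cases "low < i") auto
qed

lemma four_corners:
  assumes corner: "(low, a) \<in> S"
  shows "dihedral_type12 (m, n, S)"
proof -
  have lines: "i = yr \<or> j = yc \<or> ((i = R \<or> i = low) \<and> (j = a \<or> j = b))" if "(i, j) \<in> S" for i j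
  proof -
    have "antidiag (yr, yc) (low, a)" using below order by (auto simp: antidiag_def)
    then have "diag (yr, yc) (i, j) \<Longrightarrow> i = low \<or> j = a"
      using hub_partners_aligned[OF mono hub that corner] by auto
    then show ?thesis using off_hub_lines_below[OF that] order below(2) by auto
  qed
  have hub_row_between: "a \<le> j \<and> j \<le> b" if "(yr, j) \<in> S" for j
    using chain[OF left that below(1)] order below(2) by auto
  have row_or_col: False if "(yr, j) \<in> S" "j \<noteq> yc" "(i, yc) \<in> S" "i \<noteq> yr" for i j
    using chain[OF that(3) that(1) below(1)] chain[OF that(3) that(1) corner]
      chain[OF right that(1) that(3)] chain[OF left that(1) that(3)] that(2,4) order below(2)
    by (cases i yr rule: linorder_cases; cases j yc rule: linorder_cases) auto
  have bounds': "1 \<le> R" "low \<le> m" "1 \<le> a" "b \<le> n" using bounds wf_matD[OF wf below(1)] by auto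
  show ?thesis
  proof (cases "\<exists>j. (yr, j) \<in> S \<and> j \<noteq> yc")
    case True
    have "S \<subseteq> type1_region R yr low a b"
      using lines hub_row_between row_or_col True by (fastforce simp: type1_region_def)
    then have "type1 (m, n, S)" using order below(2) bounds' by (intro type1I) auto
    then show ?thesis using dihedral_type12I[of "(m, n, S)"] by (simp add: dihedral_images_def)
  next
    case False
    have "(\<lambda>(i, j). (j, i)) ` S \<subseteq> type1_region a yc b R low"
      using lines hub_col_between False by (fastforce simp: type1_region_def)
    then have "type1 (mtransp (m, n, S))"
      unfolding mtransp_eq using order below(2) bounds' by (intro type1I) auto
    then show ?thesis using dihedral_type12I[of "mtransp (m, n, S)"] by (simp add: dihedral_images_def)
  qed
qed

end

locale hub_below_open = hub_below +
  assumes open_corner: "(low, a) \<notin> S"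
begin

lemma lines:
  assumes "(i, j) \<in> S"
  shows "i = yr \<or> j = yc \<or> (i = R \<and> (j < yc \<or> j = b)) \<or> (j = b \<and> yr < i)"
  using off_hub_lines_below[OF assms] open_corner assms order unfolding diag_def by auto

lemma hub_row_between: "(yr, j) \<in> S \<Longrightarrow> a \<le> j \<and> j \<le> b"
  using chain[OF left _ below(1)] order below(2) by fastforce

lemma hub_cross_left:
  "(yr, j) \<in> S \<Longrightarrow> j < yc \<Longrightarrow> (i, yc) \<in> S \<Longrightarrow> i < yr \<Longrightarrow> False"
  using chain[of i yc yr j low b] below order by auto

lemma hub_col_above:
  assumes "(yr, j) \<in> S" "j \<noteq> yc" "(i, yc) \<in> S" shows "i \<le> yr"
proof (rule ccontr)
  assume "\<not> i \<le> yr"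
  then show False
    using chain[OF right assms(1,3)] chain[OF left assms(1,3)] assms(2) order by (cases j yc rule: linorder_cases) auto
qed

lemma hub_row_right:
  assumes "(yr, j) \<in> S" "j \<noteq> yc" "(i, yc) \<in> S" "R < i" "i < yr" shows "j = b"
proof -
  have "\<not> (yc < j \<and> j < b)" using chain[OF right assms(3,1)] assms(4,5) order by auto
  then show ?thesis using hub_cross_left[OF assms(1) _ assms(3,5)] hub_row_between[OF assms(1)] assms(2) by fastforce
qed

lemma hub_col_two_points:
  assumes "\<And>i. (i, yc) \<in> S \<Longrightarrow> i = R \<or> i = yr"
  shows "dihedral_type12 (m, n, S)"
proof -
  define c where "c = (LEAST j. (yr, j) \<in> S)"
  have c: "(yr, c) \<in> S" "\<And>j. (yr, j) \<in> S \<Longrightarrow> c \<le> j"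
    unfolding c_def by (auto intro: LeastI[of _ yc] Least_le hub)
  have "c \<le> yc" "a \<le> c" using c hub hub_row_between by auto
  have col_hub: "yc \<le> c" if "(R, yc) \<in> S"
    using hub_cross_left[OF c(1) _ that order(1)] by fastforce
  have "(\<lambda>(i, j). (m + 1 - i, j)) ` S \<subseteq> type2_region (m + 1 - yr) (m + 1 - R) c b"
  proof (rule image_subset_pairI)
    fix i j assume ij: "(i, j) \<in> S"
    have "1 \<le> i" "i \<le> m" "1 \<le> j" using wf_matD[OF wf ij] by auto
    consider "i = yr" | "i = R" "j = yc" | "i = R" "j < yc" | "i = R" "j = b" | "j = b" "yr < i"
      using lines[OF ij] assms[of i] ij by fastforce
    then show "(m + 1 - i, j) \<in> type2_region (m + 1 - yr) (m + 1 - R) c b"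
    proof cases
      case 1
      then show ?thesis using c(2) hub_row_between ij by (auto simp: type2_region_def)
    next
      case 2
      then show ?thesis using col_hub ij \<open>1 \<le> j\<close> by (auto simp: type2_region_def)
    next
      case 3
      then show ?thesis using left_last[of j] ij \<open>a \<le> c\<close> \<open>1 \<le> j\<close> by (auto simp: type2_region_def)
    qed (use \<open>1 \<le> i\<close> \<open>i \<le> m\<close> in \<open>auto simp: type2_region_def\<close>)
  qed
  then have "type2 (row_rev (m, n, S))"
    unfolding row_rev_eq using order bounds \<open>c \<le> yc\<close> \<open>a \<le> c\<close> by (intro type2I) auto
  then show ?thesis using dihedral_type12I[of "row_rev (m, n, S)"] by (simp add: dihedral_images_def)
qed

lemma hub_col_third_point:
  assumes "(i', yc) \<in> S" "i' \<noteq> R" "i' \<noteq> yr"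
  shows "dihedral_type12 (m, n, S)"
proof -
  have row_hub: "j = yc \<or> j = b" if "(yr, j) \<in> S" for j
  proof (cases "i' < yr")
    case True
    then show ?thesis using hub_row_right[OF that _ assms(1)] hub_col_between(1)[OF assms(1)] assms(2) by fastforce
  next
    case False
    then show ?thesis using hub_col_above[OF that _ assms(1)] assms(3) by fastforce
  qed
  define t where "t = (GREATEST i. (i, yc) \<in> S)"
  have t: "(t, yc) \<in> S" "\<And>i. (i, yc) \<in> S \<Longrightarrow> i \<le> t"
    using GreatestI_nat[of "\<lambda>i. (i, yc) \<in> S" yr m] Greatest_le_nat[of "\<lambda>i. (i, yc) \<in> S" _ m]
      hub wf_matD[OF wf] unfolding t_def by blast+
  have "yr \<le> t" "t \<le> low" "t \<le> m" using t hub hub_col_between wf_matD[OF wf] by auto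
  have col_b: "t \<le> i" if "(i, b) \<in> S" "yr \<le> i" for i
  proof (cases "i = yr")
    case True
    then show ?thesis using hub_col_above[of b t] that(1) t(1) order(3) by auto
  next
    case False
    then show ?thesis using below_first[OF that(1)] that(2) \<open>t \<le> low\<close> by auto
  qed
  have "(\<lambda>(i, j). (j, m + 1 - i)) ` S \<subseteq> type2_region yc b (m + 1 - t) (m + 1 - R)"
  proof (rule image_subset_pairI)
    fix i j assume ij: "(i, j) \<in> S"
    have "1 \<le> i" "i \<le> m" "1 \<le> j" using wf_matD[OF wf ij] by auto
    consider "j = yc" | "i = R" "j < yc" | "i = R" "j = b" | "j = b" "yr \<le> i"
      using lines[OF ij] row_hub[of j] ij by fastforce
    then show "(j, m + 1 - i) \<in> type2_region yc b (m + 1 - t) (m + 1 - R)"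
    proof cases
      case 1
      with ij have col: "(i, yc) \<in> S" by simp
      show ?thesis
        using 1 hub_col_between(1)[OF col] t(2)[OF col] \<open>t \<le> m\<close> order by (auto simp: type2_region_def)
    next
      case 4
      then show ?thesis using col_b[of i] ij \<open>i \<le> m\<close> order(3) by (auto simp: type2_region_def)
    qed (use \<open>1 \<le> j\<close> in \<open>auto simp: type2_region_def\<close>)
  qed
  then have "type2 (col_rev (mtransp (m, n, S)))"
    unfolding col_rev_mtransp_eq using order bounds \<open>yr \<le> t\<close> \<open>t \<le> m\<close> by (intro type2I) auto
  then show ?thesis using dihedral_type12I[of "col_rev (mtransp (m, n, S))"] by (simp add: dihedral_images_def)
qed

end

lemma (in hub_below) dihedral_type12: "dihedral_type12 (m, n, S)"
proof (cases "(low, a) \<in> S")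
  case True
  then show ?thesis by (rule four_corners)
next
  case False
  then interpret hub_below_open m n S R a b yr yc low by unfold_locales
  show ?thesis
  proof (cases "\<forall>i. (i, yc) \<in> S \<longrightarrow> i = R \<or> i = yr")
    case True
    then show ?thesis by (intro hub_col_two_points) blast
  next
    case False
    then show ?thesis using hub_col_third_point by blast
  qed
qed

context hub_config
begin

lemma dihedral_type12_if_below_right:
  assumes "(i, b) \<in> S" "yr < i"
  shows "dihedral_type12 (m, n, S)"
proof -
  define low where "low = (LEAST i. (i, b) \<in> S \<and> yr < i)"
  interpret hub_below m n S R a b yr yc low
    using LeastI[of "\<lambda>i. (i, b) \<in> S \<and> yr < i", OF conjI[OF assms]]
      Least_le[of "\<lambda>i. (i, b) \<in> S \<and> yr < i"]
    unfolding low_def by unfold_locales auto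
  show ?thesis by (rule dihedral_type12)
qed

lemma dihedral_type12:
  assumes "\<not> coverable_by 2 (m, n, S)"
  shows "dihedral_type12 (m, n, S)"
proof (cases "\<exists>i. (i, b) \<in> S \<and> yr < i")
  case True
  then show ?thesis using dihedral_type12_if_below_right by blast
next
  case no_right_below: False
  show ?thesis
  proof (cases "\<exists>i. (i, a) \<in> S \<and> yr < i")
    case True
    then obtain i where "(i, a) \<in> S" "yr < i" by blast
    interpret flipped: hub_config m n "(\<lambda>(i, j). (i, n + 1 - j)) ` S" R "n + 1 - b" "n + 1 - a" yr "n + 1 - yc"
      by (rule col_rev)
    have "dihedral_type12 (m, n, (\<lambda>(i, j). (i, n + 1 - j)) ` S)"
      using \<open>(i, a) \<in> S\<close> \<open>yr < i\<close> by (intro flipped.dihedral_type12_if_below_right[of i]) force+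
    then show ?thesis using dihedral_type12_col_rev[OF wf] by (simp add: col_rev_eq)
  next
    case False
    interpret hub_three_lines m n S R a b yr yc
    proof
      show "\<not> coverable_by 2 (m, n, S)" by (rule assms)
      show "i = R \<or> i = yr \<or> j = yc" if "(i, j) \<in> S" for i j
        using off_hub_lines[OF that] False no_right_below that order unfolding diag_def antidiag_def
        by (cases "i = yr") auto
    qed
    show ?thesis by (rule dihedral_type12)
  qed
qed

end

lemma dihedral_type12_if_hub_row_above:
  assumes "wf_mat (m, n, S)" "monotone_triples S" "\<not> coverable_by 2 (m, n, S)"
    and "(R, a) \<in> S" "(R, b) \<in> S" "(yr, yc) \<in> S" "R < yr" "a < yc" "yc < b"
  shows "dihedral_type12 (m, n, S)"
proof -
  define a' where "a' = (GREATEST j. (R, j) \<in> S \<and> j < yc)"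
  define b' where "b' = (LEAST j. (R, j) \<in> S \<and> yc < j)"
  have a': "(R, a') \<in> S \<and> a' < yc" "\<And>j. (R, j) \<in> S \<Longrightarrow> j < yc \<Longrightarrow> j \<le> a'"
    using GreatestI_nat[of "\<lambda>j. (R, j) \<in> S \<and> j < yc" a yc]
      Greatest_le_nat[of "\<lambda>j. (R, j) \<in> S \<and> j < yc" _ yc]
      assms(4,8) unfolding a'_def by auto
  have b': "(R, b') \<in> S \<and> yc < b'" "\<And>j. (R, j) \<in> S \<Longrightarrow> yc < j \<Longrightarrow> b' \<le> j"
    using LeastI[of "\<lambda>j. (R, j) \<in> S \<and> yc < j" b] Least_le[of "\<lambda>j. (R, j) \<in> S \<and> yc < j"]
      assms(5,9) unfolding b'_def by auto
  interpret hub_config m n S R a' b' yr yc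
    using assms(1,2,6,7) a' b' by unfold_locales auto
  show ?thesis by (rule dihedral_type12[OF assms(3)])
qed

lemma dihedral_type12_if_hub_row:
  assumes "wf_mat (m, n, S)" "monotone_triples S" "\<not> coverable_by 2 (m, n, S)"
    and "y \<in> S" "x \<in> S" "v \<in> S" "diag y x" "antidiag y v" "fst x = fst v"
  shows "dihedral_type12 (m, n, S)"
proof -
  obtain yr yc R a b where pts: "y = (yr, yc)" "x = (R, a)" "v = (R, b)"
    using assms(9) by (metis prod.collapse)
  have mem: "(yr, yc) \<in> S" "(R, a) \<in> S" "(R, b) \<in> S" using assms(4-6) unfolding pts by auto
  show ?thesis
  proof (cases "R < yr")
    case True
    with assms(7,8) have "a < yc" "yc < b" unfolding pts diag_def antidiag_def by auto
    with True show ?thesis by (intro dihedral_type12_if_hub_row_above[OF assms(1-3) mem(2,3,1)])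
  next
    case False
    with assms(7,8) have "yr < R" "b < yc" "yc < a" unfolding pts diag_def antidiag_def by auto
    have "R \<le> m" using wf_matD[OF assms(1) mem(2)] by simp
    let ?S = "(\<lambda>(i, j). (m + 1 - i, j)) ` S"
    have "wf_mat (m, n, ?S)" using wf_mat_row_rev[OF assms(1)] by (simp add: row_rev_eq)
    moreover have "\<not> coverable_by 2 (m, n, ?S)"
      using coverable_by_row_rev[OF assms(1), of 2, unfolded row_rev_eq] assms(3) by blast
    moreover have "(m + 1 - R, b) \<in> ?S" "(m + 1 - R, a) \<in> ?S" "(m + 1 - yr, yc) \<in> ?S"
      using mem by (auto intro: rev_image_eqI)
    moreover have "m + 1 - R < m + 1 - yr" using \<open>yr < R\<close> \<open>R \<le> m\<close> by simp
    ultimately have "dihedral_type12 (m, n, ?S)"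
      using \<open>b < yc\<close> \<open>yc < a\<close>
      by (intro dihedral_type12_if_hub_row_above[OF _ monotone_triples_row_rev[OF assms(1,2)]])
    then show ?thesis using dihedral_type12_row_rev[OF assms(1)] by (simp add: row_rev_eq)
  qed
qed

lemma dihedral_type12_if_hub:
  assumes "wf_mat (m, n, S)" "monotone_triples S" "\<not> coverable_by 2 (m, n, S)"
    and "y \<in> S" "x \<in> S" "v \<in> S" "diag y x" "antidiag y v"
  shows "dihedral_type12 (m, n, S)"
proof (cases "fst x = fst v")
  case True
  then show ?thesis using dihedral_type12_if_hub_row[OF assms] by blast
next
  case False
  let ?swap = "\<lambda>(i, j). (j, i)"
  have swap: "diag (?swap p) (?swap q) = diag p q" "antidiag (?swap p) (?swap q) = antidiag p q" for p q
    by (auto simp: diag_def antidiag_def case_prod_beta)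
  have "fst (?swap x) = fst (?swap v)"
    using hub_partners_aligned[OF assms(2,4-8)] False by (simp add: case_prod_beta)
  moreover have "wf_mat (n, m, ?swap ` S)" using wf_mat_mtransp[OF assms(1)] by (simp add: mtransp_eq)
  moreover have "\<not> coverable_by 2 (n, m, ?swap ` S)"
    using coverable_by_mtransp[of 2 "(m, n, S)", unfolded mtransp_eq] assms(3) by blast
  moreover have "diag (?swap y) (?swap x)" "antidiag (?swap y) (?swap v)" using assms(7,8) swap by blast+
  ultimately have "dihedral_type12 (n, m, ?swap ` S)"
    by (intro dihedral_type12_if_hub_row[OF _ monotone_triples_mtransp[OF assms(2)] _
          imageI[OF assms(4)] imageI[OF assms(5)] imageI[OF assms(6)]])
  then show ?thesis using dihedral_type12_mtransp[of "(m, n, S)"] by (simp add: mtransp_eq)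
qed

lemma hub_if_general_position:
  assumes "e \<in> S" "e' \<in> S" "diag e e'" "d \<in> S" "d' \<in> S" "antidiag d d'"
    and "fst e \<noteq> fst d" "snd e \<noteq> snd d"
  shows "\<exists>y\<in>S. \<exists>x\<in>S. \<exists>v\<in>S. diag y x \<and> antidiag y v"
proof (cases "diag e d")
  case True
  then show ?thesis using assms(1,4-6) diag_commute by blast
next
  case False
  then show ?thesis using diag_or_antidiag[OF assms(7,8)] assms(1-4) by blast
qed

lemma hub_exists:
  assumes "\<not> coverable_by 2 (m, n, S)" "wf_mat (m, n, S)"
    and "p \<in> S" "p' \<in> S" "diag p p'" "q \<in> S" "q' \<in> S" "antidiag q q'"
  shows "\<exists>y\<in>S. \<exists>x\<in>S. \<exists>v\<in>S. diag y x \<and> antidiag y v"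
proof (cases "\<exists>e\<in>{p, p'}. \<exists>d\<in>{q, q'}. fst e \<noteq> fst d \<and> snd e \<noteq> snd d")
  case True
  then obtain e d where "e \<in> {p, p'}" "d \<in> {q, q'}" "fst e \<noteq> fst d" "snd e \<noteq> snd d" by blast
  moreover have "\<exists>e'\<in>S. diag e e'" "\<exists>d'\<in>S. antidiag d d'"
    using calculation(1,2) assms(3-8) diag_commute antidiag_commute by blast+
  ultimately show ?thesis using hub_if_general_position assms(3,4,6,7) by blast
next
  case False
  have q_apart: "fst q \<noteq> fst q'" "snd q \<noteq> snd q'" and p_apart: "snd p \<noteq> snd p'"
    using assms(5,8) unfolding diag_def antidiag_def by auto
  have rows: "fst e = fst q \<or> fst e = fst q'" if "e \<in> {p, p'}" for e
    using False that q_apart by fastforce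
  obtain i j where z: "(i, j) \<in> S" "i \<noteq> fst q" "i \<noteq> fst q'"
    by (rule not_coverable_by_2_rows[OF assms(1,2)])
  obtain d d' where d: "d \<in> S" "d' \<in> S" "antidiag d d'" "fst d \<noteq> i" "snd d \<noteq> j"
    using q_apart z assms(6-8) antidiag_commute by (metis insertCI)
  obtain e e' where e: "e \<in> S" "e' \<in> S" "diag e e'" "fst e \<noteq> i" "snd e \<noteq> j"
    using p_apart z rows assms(3-5) diag_commute by (metis insertCI)
  show ?thesis
  proof (cases "diag (i, j) d")
    case True
    then show ?thesis using hub_if_general_position[OF z(1) d(1) True d(1-3)] d(4,5) by auto
  next
    case False
    then have "antidiag (i, j) d" using diag_or_antidiag[of "(i, j)" d] d(4,5) by auto
    with e show ?thesis using hub_if_general_position[OF e(1-3) z(1) d(1)] by auto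
  qed
qed

theorem lemma3p17:
  fixes P :: bmat
  assumes "wf_mat P"
    and "\<not> interval_minor Q1 P" and "\<not> interval_minor Q2 P"
    and "\<not> interval_minor Q3 P" and "\<not> interval_minor Q4 P"
    and "interval_minor D2 P" and "interval_minor D2bar P"
    and "\<not> coverable_by 2 P"
  shows "\<exists>P0. dihedral_image P P0 \<and> (type1 P0 \<or> type2 P0)"
proof -
  obtain m n S where P: "P = (m, n, S)" by (cases P)
  have wf: "wf_mat (m, n, S)" and nc: "\<not> coverable_by 2 (m, n, S)" using assms(1,8) P by simp_all
  have mono: "monotone_triples S" using monotone_triples_if_Q_free[OF wf] assms(2-5) P by simp
  obtain p p' q q' where "p \<in> S" "p' \<in> S" "diag p p'" "q \<in> S" "q' \<in> S" "antidiag q q'"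
    using interval_minor_D2_diag interval_minor_D2bar_antidiag assms(6,7) P by metis
  then obtain y x v where "y \<in> S" "x \<in> S" "v \<in> S" "diag y x" "antidiag y v"
    using hub_exists[OF nc wf] by blast
  then have "dihedral_type12 (m, n, S)" by (rule dihedral_type12_if_hub[OF wf mono nc])
  then show ?thesis unfolding dihedral_type12_def P .
qed

end
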